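(* For each $n\in\mathbb{N}^2$, the map $L_n:\mathcal{O}_\theta\to\mathcal{O}_\theta$ defined by \[L_n(a)=\frac{1}{N^n}\sum_{\lambda\in\Lambda_\theta^n}s_\lambda^*as_\lambda\] is a transfer operator for $\alpha_n$ (that is, $L_n$ is positive and linear and $L_n(\alpha_n(a)b)=aL_n(b)$ for all $a,b\in\mathcal{O}_\theta$) such that $L_n(1)=1$, and $L_m\circ L_n=L_{m+n}$ for all $m,n\in\mathbb{N}^2$.
   Context: $E$ is a finite directed graph with one vertex whose edge set is partitioned into $N_1$ blue edges $E^1_B$ and $N_2$ red edges $E^1_R$; $\theta$ is a bijection from blue-red paths $ef$ ($e\in E^1_B$, $f\in E^1_R$) onto red-blue paths, written $\theta(ef)=\theta_1(ef)\theta_2(ef)$. $\Lambda_\theta$ is the unique $2$-graph (category with degree functor $d:\Lambda_\theta\to\mathbb{N}^2$ satisfying unique factorisation) with one vertex, $\Lambda_\theta^{(1,0)}=E^1_B$, $\Lambda_\theta^{(0,1)}=E^1_R$, and $ef=\theta_1(ef)\theta_2(ef)$; $\Lambda_\theta^n=d^{-1}(n)$, which has $N^n:=N_1^{n_1}N_2^{n_2}$ elements for $n=(n_1,n_2)$. $\mathcal{O}_\theta=C^*(\Lambda_\theta)$ is the universal $C^*$-algebra generated by isometries $\{s_\lambda:\lambda\in\Lambda_\theta\}$ with $s_{\lambda\mu}=s_\lambda s_\mu$ and $\sum_{\lambda\in\Lambda_\theta^n}s_\lambda s_\lambda^*=1$ for all $n$ (equivalently, by Cuntz families $\{s_e\}_{e\in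 E^1_B}$, $\{s_f\}_{f\in E^1_R}$ with $s_es_f=s_{\theta_1(ef)}s_{\theta_2(ef)}$). For $n\in\mathbb{N}^2$, $\alpha_n(a)=\sum_{\lambda\in\Lambda_\theta^n}s_\lambda as_\lambda^*$. *)

theory Defs
  imports "HOL-Analysis.Analysis" "HOL-Library.Product_Plus"
begin

class cstar_algebra = real_normed_algebra_1 + banach +
  fixes scaleC :: "complex \<Rightarrow> 'a \<Rightarrow> 'a"
    and adj :: "'a \<Rightarrow> 'a"
  assumes scaleC_of_real: "scaleC (complex_of_real r) x = scaleR r x"
    and scaleC_add_right: "scaleC c (x + y) = scaleC c x + scaleC c y"
    and scaleC_add_left: "scaleC (c + d) x = scaleC c x + scaleC d x"
    and scaleC_scaleC: "scaleC c (scaleC d x) = scaleC (c * d) x"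
    and scaleC_one: "scaleC 1 x = x"
    and mult_scaleC_left: "scaleC c x * y = scaleC c (x * y)"
    and mult_scaleC_right: "x * scaleC c y = scaleC c (x * y)"
    and norm_scaleC: "norm (scaleC c x) = cmod c * norm x"
    and adj_adj: "adj (adj x) = x"
    and adj_add: "adj (x + y) = adj x + adj y"
    and adj_scaleC: "adj (scaleC c x) = scaleC (cnj c) (adj x)"
    and adj_mult: "adj (x * y) = adj y * adj x"
    and cstar_identity: "norm (adj x * x) = (norm x)\<^sup>2"

definition positive :: "'a::cstar_algebra \<Rightarrow> bool" where
  "positive x \<longleftrightarrow> (\<exists>y. x = adj y * y)"

definition positive_map :: "('a::cstar_algebra \<Rightarrow> 'a) \<Rightarrow> bool" where
  "positive_map L \<longleftrightarrow> (\<forall>x. positive x \<longrightarrow> positive (L x))"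

definition clinear_map :: "('a::cstar_algebra \<Rightarrow> 'a) \<Rightarrow> bool" where
  "clinear_map L \<longleftrightarrow> (\<forall>x y. L (x + y) = L x + L y) \<and> (\<forall>c x. L (scaleC c x) = scaleC c (L x))"

definition transfer_operator :: "('a::cstar_algebra \<Rightarrow> 'a) \<Rightarrow> ('a \<Rightarrow> 'a) \<Rightarrow> bool" where
  "transfer_operator alpha L \<longleftrightarrow>
     positive_map L \<and> clinear_map L \<and> (\<forall>a b. L (alpha a * b) = a * L b)"

text \<open>Blue edges are 0..<N1, red edges are 0..<N2.  By unique factorisation
  every path lambda of degree (n1,n2) factors uniquely as a blue path of
  length n1 followed by a red path of length n2; we represent lambda by this
  pair of words.\<close>

definition paths :: "nat \<Rightarrow> nat \<Rightarrow> nat \<times> nat \<Rightarrow> (nat list \<times> nat list) set" where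
  "paths N1 N2 n = {(w, v). length w = fst n \<and> set w \<subseteq> {..<N1} \<and>
                            length v = snd n \<and> set v \<subseteq> {..<N2}}"

definition spath :: "(nat \<Rightarrow> 'a::cstar_algebra) \<Rightarrow> (nat \<Rightarrow> 'a) \<Rightarrow> nat list \<times> nat list \<Rightarrow> 'a" where
  "spath sB sR p = prod_list (map sB (fst p)) * prod_list (map sR (snd p))"

definition alpha_n :: "nat \<Rightarrow> nat \<Rightarrow> (nat \<Rightarrow> 'a::cstar_algebra) \<Rightarrow> (nat \<Rightarrow> 'a) \<Rightarrow> nat \<times> nat \<Rightarrow> 'a \<Rightarrow> 'a" where
  "alpha_n N1 N2 sB sR n a = (\<Sum>p\<in>paths N1 N2 n. spath sB sR p * a * adj (spath sB sR p))"

definition L_n :: "nat \<Rightarrow> nat \<Rightarrow> (nat \<Rightarrow> 'a::cstar_algebra) \<Rightarrow> (nat \<Rightarrow> 'a) \<Rightarrow> nat \<times> nat \<Rightarrow> 'a \<Rightarrow> 'a" where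
  "L_n N1 N2 sB sR n a =
     scaleR (1 / real (N1 ^ fst n * N2 ^ snd n))
       (\<Sum>p\<in>paths N1 N2 n. adj (spath sB sR p) * a * spath sB sR p)"

text \<open>A Cuntz--Krieger Lambda_theta family: Cuntz families of blue and red
  isometries satisfying the commutation relations given by theta, where
  theta (e, f) = (theta1 (ef), theta2 (ef)) with theta1 red and theta2 blue.\<close>
definition theta_family ::
  "nat \<Rightarrow> nat \<Rightarrow> (nat \<times> nat \<Rightarrow> nat \<times> nat) \<Rightarrow> (nat \<Rightarrow> 'a::cstar_algebra) \<Rightarrow> (nat \<Rightarrow> 'a) \<Rightarrow> bool" where
  "theta_family N1 N2 theta sB sR \<longleftrightarrow>
     (\<forall>e<N1. adj (sB e) * sB e = 1) \<and> (\<Sum>e<N1. sB e * adj (sB e)) = 1 \<and>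
     (\<forall>f<N2. adj (sR f) * sR f = 1) \<and> (\<Sum>f<N2. sR f * adj (sR f)) = 1 \<and>
     (\<forall>e<N1. \<forall>f<N2. sB e * sR f = sR (fst (theta (e, f))) * sB (snd (theta (e, f))))"

end

theory Submission
  imports Defs
begin

text \<open>The isometries \<open>s\<^sub>\<lambda>\<close>, \<open>\<lambda> \<in> \<Lambda>\<^sup>n\<close>, satisfy \<open>s\<^sub>\<mu>\<^sup>* s\<^sub>\<lambda> = \<delta>\<^sub>\<lambda>\<^sub>\<mu>\<close>.  This orthonormality alone
  gives \<open>L\<^sub>n(\<alpha>\<^sub>n(a) b) = a L\<^sub>n(b)\<close>, positivity (\<open>L\<^sub>n(y\<^sup>* y) = z\<^sup>* z\<close> for
  \<open>z = N\<^sup>-\<^sup>n\<^sup>/\<^sup>2 \<Sum> s\<^sub>\<lambda> y s\<^sub>\<lambda>\<close>) and \<open>L\<^sub>n(1) = 1\<close>.  For the semigroup law, \<open>L\<^sub>n\<close> is, up to the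
  factor \<open>N\<^sup>-\<^sup>n\<close>, the composite of \<open>n\<^sub>1\<close> blue and \<open>n\<^sub>2\<close> red one-edge compressions
  \<open>a \<mapsto> \<Sum> s\<^sub>e\<^sup>* a s\<^sub>e\<close>, and the blue and red compressions commute because \<open>\<theta>\<close> is a bijection.

  Orthonormality of a Cuntz family needs positivity, which the bare C*-axioms do not
  provide through spectral theory.  It is replaced by an elementary criterion: a
  self-adjoint \<open>a\<close> with \<open>\<parallel>1 + t a\<parallel> \<le> 1\<close> for all \<open>|t| \<le> 1\<close> vanishes.  Via the C*-identity
  this extends to \<open>\<parallel>1 + z a\<parallel> \<le> 1\<close> for complex \<open>|z| \<le> 1/4\<close>, and averaging
  \<open>\<omega>\<^sup>-\<^sup>k (1 + \<omega>\<^sup>k a/4)\<^sup>M\<close> over the \<open>(M+1)\<close>-th roots of unity \<open>\<omega>\<^sup>k\<close> isolates the linear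
  term, so that \<open>M \<parallel>a\<parallel> \<le> 4\<close> for every \<open>M\<close>.\<close>

lemma scaleC_zero_right [simp]: "scaleC c (0::'a::cstar_algebra) = 0"
  using scaleC_add_right [of c "0::'a" 0] by simp

lemma scaleC_zero_left [simp]: "scaleC 0 (x::'a::cstar_algebra) = 0"
  using scaleC_add_left [of 0 0 x] by simp

lemma scaleC_sum_right: "scaleC c (sum f S) = (\<Sum>x\<in>S. scaleC c (f x :: 'a::cstar_algebra))"
  by (induction S rule: infinite_finite_induct) (auto simp: scaleC_add_right)

lemma scaleC_sum_left: "scaleC (sum f S) (x::'a::cstar_algebra) = (\<Sum>i\<in>S. scaleC (f i) x)"
  by (induction S rule: infinite_finite_induct) (auto simp: scaleC_add_left)

lemma scaleR_eq_scaleC: "scaleR r (x::'a::cstar_algebra) = scaleC (complex_of_real r) x"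
  by (simp add: scaleC_of_real)

lemma scaleC_scaleR_commute: "scaleC c (scaleR r x) = scaleR r (scaleC c (x::'a::cstar_algebra))"
  by (simp add: scaleR_eq_scaleC scaleC_scaleC mult.commute)

lemma mult_scaleC_scaleC: "scaleC c x * scaleC d y = scaleC (c * d) (x * (y::'a::cstar_algebra))"
  by (simp add: mult_scaleC_left mult_scaleC_right scaleC_scaleC mult.commute)

lemma adj_zero [simp]: "adj (0::'a::cstar_algebra) = 0"
  using adj_add [of "0::'a" 0] by simp

lemma adj_one [simp]: "adj (1::'a::cstar_algebra) = 1"
proof -
  have "adj (1::'a) = adj 1 * adj (adj 1)" by (simp only: adj_adj mult_1_right)
  also have "\<dots> = adj (adj 1 * 1)" by (simp only: adj_mult)
  also have "\<dots> = 1" by (simp add: adj_adj)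
  finally show ?thesis .
qed

lemma adj_sum: "adj (sum f S) = (\<Sum>x\<in>S. adj (f x :: 'a::cstar_algebra))"
  by (induction S rule: infinite_finite_induct) (auto simp: adj_add)

lemma adj_scaleR: "adj (scaleR r (x::'a::cstar_algebra)) = scaleR r (adj x)"
  by (simp add: scaleR_eq_scaleC adj_scaleC)

lemma adj_diff: "adj ((x::'a::cstar_algebra) - y) = adj x - adj y"
proof -
  have "adj (- y) = - adj y"
    using adj_add [of y "- y"] by (simp add: eq_neg_iff_add_eq_0 add.commute)
  then show ?thesis using adj_add [of x "- y"] by simp
qed

lemma norm_adj: "norm (adj (x::'a::cstar_algebra)) = norm x"
proof -
  have le: "norm y \<le> norm (adj y)" for y :: 'a
  proof (cases "y = 0")
    case False
    have "(norm y)\<^sup>2 \<le> norm (adj y) * norm y"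
      using cstar_identity [of y] norm_mult_ineq [of "adj y" y] by simp
    then show ?thesis using False by (simp add: power2_eq_square)
  qed simp
  show ?thesis using le [of x] le [of "adj x"] by (simp add: adj_adj)
qed

lemma norm_le_one_if_norm_adj_mult_le_one:
  "norm (adj x * (x::'a::cstar_algebra)) \<le> 1 \<Longrightarrow> norm x \<le> 1"
  by (simp add: cstar_identity power_le_one_iff)

lemma norm_isometry_le_one: "adj s * s = 1 \<Longrightarrow> norm (s::'a::cstar_algebra) \<le> 1"
  by (rule norm_le_one_if_norm_adj_mult_le_one) simp

lemma norm_projection_le_one:
  assumes "adj P = P" and "P * P = (P::'a::cstar_algebra)"
  shows "norm P \<le> 1"
proof -
  have "(norm P)\<^sup>2 = norm P" using cstar_identity [of P] assms by simp
  then show ?thesis by (cases "norm P = 0") (auto simp: power2_eq_square)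
qed

lemma norm_le_one_if_norm_double_le_two: "norm (x + x) \<le> 2 \<Longrightarrow> norm (x::'a::real_normed_vector) \<le> 1"
  by (simp flip: scaleR_2)

lemma norm_convex_combination_one_le_one:
  fixes x :: "'a::real_normed_algebra_1"
  assumes "norm x \<le> 1" and "0 \<le> \<mu>" and "\<mu> \<le> 1"
  shows "norm (scaleR (1 - \<mu>) 1 + scaleR \<mu> x) \<le> 1"
proof -
  have "norm (scaleR (1 - \<mu>) (1::'a) + scaleR \<mu> x) \<le> (1 - \<mu>) + \<mu> * norm x"
    using norm_triangle_ineq [of "scaleR (1 - \<mu>) (1::'a)" "scaleR \<mu> x"] assms(2,3) by simp
  also have "\<dots> \<le> 1" using assms mult_left_le [of "norm x" \<mu>] by simp
  finally show ?thesis .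
qed

lemma power_one_plus_scaleC:
  fixes a :: "'a::cstar_algebra"
  shows "(1 + scaleC z a) ^ M = (\<Sum>j\<le>M. scaleC (of_nat (M choose j) * z ^ j) (a ^ j))"
proof (induction M)
  case 0
  then show ?case by (simp add: scaleC_one)
next
  case (Suc M)
  define S where "S = (\<Sum>j\<le>M. scaleC (of_nat (M choose j) * z ^ j) (a ^ j))"
  have S_Suc: "S = (\<Sum>j\<le>Suc M. scaleC (of_nat (M choose j) * z ^ j) (a ^ j))"
    by (simp add: S_def binomial_eq_0)
  have "scaleC z a * S = (\<Sum>j\<le>M. scaleC (z * (of_nat (M choose j) * z ^ j)) (a ^ Suc j))"
    unfolding S_def by (simp add: sum_distrib_left mult_scaleC_scaleC)
  also have "\<dots> = (\<Sum>j\<le>Suc M. scaleC (if j = 0 then 0 else of_nat (M choose (j - 1)) * z ^ j) (a ^ j))"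
    by (subst sum.atMost_Suc_shift) (simp add: mult.commute mult.left_commute)
  finally have shifted: "scaleC z a * S = \<dots>" .
  have "(1 + scaleC z a) ^ Suc M = S + scaleC z a * S"
    using Suc by (simp add: S_def distrib_right)
  also have "\<dots> = (\<Sum>j\<le>Suc M. scaleC (of_nat (M choose j) * z ^ j
                     + (if j = 0 then 0 else of_nat (M choose (j - 1)) * z ^ j)) (a ^ j))"
    unfolding shifted by (subst S_Suc) (simp add: sum.distrib [symmetric] scaleC_add_left)
  also have "\<dots> = (\<Sum>j\<le>Suc M. scaleC (of_nat (Suc M choose j) * z ^ j) (a ^ j))"
    by (rule sum.cong [OF refl], rename_tac j, case_tac j) (simp_all add: algebra_simps)
  finally show ?case .
qed

lemma sum_powers_root_of_unity:
  fixes n :: nat and m :: int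
  assumes n: "n > 0" and m: "\<bar>m\<bar> < int n"
  shows "(\<Sum>k<n. exp (\<i> * complex_of_real (2 * pi * of_int m / real n)) ^ k)
         = (if m = 0 then of_nat n else 0)"
proof (cases "m = 0")
  case False
  define x where "x = exp (\<i> * complex_of_real (2 * pi * of_int m / real n))"
  have "x ^ n = exp (\<i> * complex_of_real (2 * pi * of_int m))"
    unfolding x_def exp_of_nat_mult [symmetric] using n by (simp add: field_simps)
  then have xn: "x ^ n = 1" by (simp add: exp_eq_1)
  have "x \<noteq> 1"
  proof
    assume "x = 1"
    then obtain k :: int where "2 * pi * of_int m / real n = of_int (2 * k) * pi"
      unfolding x_def by (subst (asm) exp_eq_1) auto
    then have "real_of_int m = of_int k * real n" using n by (simp add: field_simps)
    then have "m = k * int n" by (metis of_int_eq_iff of_int_mult of_int_of_nat_eq)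
    with m False show False
      by (cases "k = 0") (auto simp: abs_mult dest!: mult_le_cancel_right1 [THEN iffD2, of _ "int n"])
  qed
  with False xn show ?thesis unfolding x_def [symmetric] by (simp add: sum_gp_strict)
qed simp

lemma sum_rotations_power_one_plus_scaleC:
  fixes a :: "'a::cstar_algebra"
  assumes M: "M \<ge> 1"
  defines "\<theta> \<equiv> 2 * pi / real (Suc M)"
  shows "(\<Sum>k\<le>M. scaleC (exp (\<i> * complex_of_real (- \<theta> * real k)))
            ((1 + scaleC (z * exp (\<i> * complex_of_real (\<theta> * real k))) a) ^ M))
         = scaleC (of_nat (M * Suc M) * z) a"
proof -
  define w where "w k = exp (\<i> * complex_of_real (- \<theta> * real k))" for k :: nat
  define \<zeta> where "\<zeta> k = z * exp (\<i> * complex_of_real (\<theta> * real k))" for k :: nat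
  have coefficient: "(\<Sum>k\<le>M. w k * \<zeta> k ^ j) = z ^ j * (if j = 1 then of_nat (Suc M) else 0)"
    if "j \<le> M" for j
  proof -
    have "w k * \<zeta> k ^ j = z ^ j * exp (\<i> * complex_of_real (2 * pi * of_int (int j - 1) / real (Suc M))) ^ k"
      for k
    proof -
      have "w k * \<zeta> k ^ j = z ^ j * exp (\<i> * complex_of_real (- \<theta> * real k)
                                       + of_nat j * (\<i> * complex_of_real (\<theta> * real k)))"
        unfolding w_def \<zeta>_def power_mult_distrib exp_of_nat_mult [symmetric] exp_add
        by (simp only: mult_ac)
      also have "\<i> * complex_of_real (- \<theta> * real k) + of_nat j * (\<i> * complex_of_real (\<theta> * real k))
          = of_nat k * (\<i> * complex_of_real (2 * pi * of_int (int j - 1) / real (Suc M)))"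
        by (simp add: \<theta>_def algebra_simps flip: add_divide_distrib)
      finally show ?thesis by (simp only: exp_of_nat_mult)
    qed
    then have "(\<Sum>k\<le>M. w k * \<zeta> k ^ j)
        = z ^ j * (\<Sum>k\<le>M. exp (\<i> * complex_of_real (2 * pi * of_int (int j - 1) / real (Suc M))) ^ k)"
      by (simp only: sum_distrib_left)
    also have "\<dots> = z ^ j * (if int j - 1 = 0 then of_nat (Suc M) else 0)"
      using that M by (subst sum_powers_root_of_unity [of "Suc M", unfolded lessThan_Suc_atMost]) auto
    finally show ?thesis by auto
  qed
  have "(\<Sum>k\<le>M. scaleC (w k) ((1 + scaleC (\<zeta> k) a) ^ M))
      = (\<Sum>k\<le>M. \<Sum>j\<le>M. scaleC (w k * (of_nat (M choose j) * \<zeta> k ^ j)) (a ^ j))"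
    by (simp add: power_one_plus_scaleC scaleC_sum_right scaleC_scaleC)
  also have "\<dots> = (\<Sum>j\<le>M. scaleC (of_nat (M choose j) * (\<Sum>k\<le>M. w k * \<zeta> k ^ j)) (a ^ j))"
    by (subst sum.swap) (simp add: scaleC_sum_left [symmetric] sum_distrib_left mult_ac)
  also have "\<dots> = (\<Sum>j\<le>M. if j = 1 then scaleC (of_nat (M * Suc M) * z) a else 0)"
    by (rule sum.cong [OF refl]) (auto simp: coefficient algebra_simps)
  also have "\<dots> = scaleC (of_nat (M * Suc M) * z) a"
    using M by simp
  finally show ?thesis by (simp add: w_def \<zeta>_def)
qed

lemma norm_one_plus_scaleR_square_le_one:
  fixes a :: "'a::cstar_algebra"
  assumes contr: "\<And>l. \<bar>l\<bar> \<le> 1 \<Longrightarrow> norm (1 + scaleR l a) \<le> 1"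
    and "0 \<le> \<mu>" and "\<mu> \<le> 1"
  shows "norm (1 + scaleR \<mu> (a * a)) \<le> 1"
proof -
  define l where "l = sqrt \<mu>"
  have sq: "(1 + scaleR t a) * (1 + scaleR t a) = 1 + scaleR t a + scaleR t a + scaleR (t * t) (a * a)" for t
    by (simp add: distrib_left distrib_right add.assoc scaleR_add_right)
  have sq_le: "norm ((1 + scaleR t a) * (1 + scaleR t a)) \<le> 1" if "\<bar>t\<bar> \<le> 1" for t
    using norm_mult_ineq [of "1 + scaleR t a" "1 + scaleR t a"] contr [OF that]
    by (smt (verit) mult_le_one norm_ge_zero)
  have l: "\<bar>l\<bar> \<le> 1" "l * l = \<mu>"
    using assms(2,3) by (auto simp: l_def)
  have "(1 + scaleR \<mu> (a * a)) + (1 + scaleR \<mu> (a * a))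
      = (1 + scaleR l a) * (1 + scaleR l a) + (1 + scaleR (- l) a) * (1 + scaleR (- l) a)"
    unfolding sq by (simp add: l(2))
  also have "norm \<dots> \<le> 1 + 1"
    using l(1) by (intro order_trans [OF norm_triangle_ineq] add_mono sq_le) auto
  finally show ?thesis by (metis norm_le_one_if_norm_double_le_two one_add_one)
qed

lemma norm_one_plus_scaleC_le_one:
  fixes a :: "'a::cstar_algebra"
  assumes sa: "adj a = a" and contr: "\<And>l. \<bar>l\<bar> \<le> 1 \<Longrightarrow> norm (1 + scaleR l a) \<le> 1"
    and z: "cmod z \<le> 1/4"
  shows "norm (1 + scaleC z a) \<le> 1"
proof -
  define E where "E = 1 + scaleC z a"
  have "adj E = 1 + scaleC (cnj z) a"
    by (simp add: E_def adj_add adj_scaleC sa)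
  then have "adj E * E = 1 + (scaleC z a + scaleC (cnj z) a) + scaleC (cnj z * z) (a * a)"
    by (simp add: E_def distrib_left distrib_right mult_scaleC_scaleC add_ac)
  also have "scaleC z a + scaleC (cnj z) a = scaleR (2 * Re z) a"
    by (simp add: scaleC_add_left [symmetric] complex_add_cnj scaleR_eq_scaleC)
  also have "cnj z * z = complex_of_real ((cmod z)\<^sup>2)"
    by (metis complex_norm_square mult.commute)
  finally have "adj E * E = 1 + scaleR (2 * Re z) a + scaleR ((cmod z)\<^sup>2) (a * a)"
    by (simp add: scaleR_eq_scaleC)
  then have EE: "adj E * E + adj E * E
      = (1 + scaleR (4 * Re z) a) + (1 + scaleR (2 * (cmod z)\<^sup>2) (a * a))"
    by (simp add: algebra_simps flip: scaleR_add_left)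
  have linear: "norm (1 + scaleR (4 * Re z) a) \<le> 1"
    using contr abs_Re_le_cmod [of z] z by simp
  have "(cmod z)\<^sup>2 \<le> (1/4)\<^sup>2"
    using z by (intro power_mono) auto
  then have quadratic: "norm (1 + scaleR (2 * (cmod z)\<^sup>2) (a * a)) \<le> 1"
    by (intro norm_one_plus_scaleR_square_le_one [OF contr]) (auto simp: power2_eq_square)
  have "norm (adj E * E + adj E * E) \<le> 2"
    unfolding EE using order_trans [OF norm_triangle_ineq add_mono [OF linear quadratic]] by simp
  then show ?thesis
    unfolding E_def [symmetric]
    by (rule norm_le_one_if_norm_adj_mult_le_one [OF norm_le_one_if_norm_double_le_two])
qed

lemma norm_le_four_if_norm_one_plus_le_one:
  fixes a :: "'a::cstar_algebra"
  assumes sa: "adj a = a" and contr: "\<And>l. \<bar>l\<bar> \<le> 1 \<Longrightarrow> norm (1 + scaleR l a) \<le> 1"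
    and M: "M \<ge> 1"
  shows "real M * norm a \<le> 4"
proof -
  define \<theta> where "\<theta> = 2 * pi / real (Suc M)"
  define T where "T = (\<Sum>k\<le>M. scaleC (exp (\<i> * complex_of_real (- \<theta> * real k)))
            ((1 + scaleC (1/4 * exp (\<i> * complex_of_real (\<theta> * real k))) a) ^ M))"
  have "norm T \<le> (\<Sum>k\<le>M. norm ((1 + scaleC (1/4 * exp (\<i> * complex_of_real (\<theta> * real k))) a) ^ M))"
    unfolding T_def by (rule order_trans [OF norm_sum]) (simp add: norm_scaleC)
  also have "\<dots> \<le> (\<Sum>k\<le>M. 1)"
  proof (rule sum_mono)
    fix k
    have "norm (1 + scaleC (1/4 * exp (\<i> * complex_of_real (\<theta> * real k))) a) \<le> 1"
      by (rule norm_one_plus_scaleC_le_one [OF sa contr]) (simp only: norm_mult norm_exp_i_times, simp)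
    then show "norm ((1 + scaleC (1/4 * exp (\<i> * complex_of_real (\<theta> * real k))) a) ^ M) \<le> 1"
      by (meson norm_power_ineq norm_ge_zero power_le_one order_trans)
  qed
  finally have "norm T \<le> real (Suc M)" by simp
  moreover have "T = scaleC (complex_of_real (real (M * Suc M) / 4)) a"
    unfolding T_def \<theta>_def using sum_rotations_power_one_plus_scaleC [OF M, where z = "1/4"] by simp
  then have "norm T = real M * real (Suc M) / 4 * norm a"
    by (simp only: norm_scaleC norm_of_real) (simp add: algebra_simps)
  ultimately have "(real M * norm a) * real (Suc M) \<le> 4 * real (Suc M)"
    by (simp add: algebra_simps)
  then show ?thesis by (rule mult_right_le_imp_le) simp
qed

lemma selfadjoint_eq_0_if_norm_one_plus_le_one:
  fixes a :: "'a::cstar_algebra"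
  assumes "adj a = a" and "\<And>l. \<bar>l\<bar> \<le> 1 \<Longrightarrow> norm (1 + scaleR l a) \<le> 1"
  shows "a = 0"
proof (rule ccontr)
  assume "a \<noteq> 0"
  then have a: "norm a > 0" by simp
  obtain M :: nat where M: "4 / norm a < real M" using reals_Archimedean2 by blast
  moreover have "0 < 4 / norm a" using a by simp
  ultimately have "M \<ge> 1" by linarith
  with assms have "real M * norm a \<le> 4" by (rule norm_le_four_if_norm_one_plus_le_one)
  with M a show False by (simp add: field_simps)
qed

lemma selfadjoint_sum_eq_0_imp_eq_0:
  fixes t :: "'i \<Rightarrow> 'a::cstar_algebra"
  assumes S: "finite S" and sa: "\<And>i. i \<in> S \<Longrightarrow> adj (t i) = t i"
    and contr: "\<And>i. i \<in> S \<Longrightarrow> norm (1 - t i) \<le> 1"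
    and sum: "sum t S = 0" and j: "j \<in> S"
  shows "t j = 0"
proof (cases "S - {j} = {}")
  case True
  then have "S = {j}" using j by auto
  then show ?thesis using sum by simp
next
  case False
  define R where "R = S - {j}"
  define m where "m = real (card R)"
  have m: "m \<ge> 1"
    using False S by (simp add: R_def m_def Suc_le_eq card_gt_0_iff)
  have sum_R: "(\<Sum>k\<in>R. 1 - t k) = scaleR m 1 + t j"
  proof -
    have "sum t R = - t j"
      using sum sum.remove [OF S j, of t] by (simp add: R_def eq_neg_iff_add_eq_0 add.commute)
    then show ?thesis
      by (simp add: sum_subtractf m_def of_real_def [symmetric])
  qed
  \<comment> \<open>\<open>1 + l t\<^sub>j/m\<close> is a convex combination of \<open>1\<close> with \<open>1 - t\<^sub>j\<close> if \<open>l \<le> 0\<close>, and with the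
    average of the \<open>1 - t\<^sub>k\<close>, \<open>k \<in> R\<close>, if \<open>l > 0\<close>\<close>
  have "scaleR (1 / m) (t j) = 0"
  proof (rule selfadjoint_eq_0_if_norm_one_plus_le_one)
    show "adj (scaleR (1 / m) (t j)) = scaleR (1 / m) (t j)"
      using sa j by (simp add: adj_scaleR)
  next
    fix l :: real
    assume l: "\<bar>l\<bar> \<le> 1"
    show "norm (1 + scaleR l (scaleR (1 / m) (t j))) \<le> 1"
    proof (cases "l \<le> 0")
      case True
      have "1 + scaleR l (scaleR (1 / m) (t j)) = scaleR (1 - (- l / m)) 1 + scaleR (- l / m) (1 - t j)"
        by (simp add: algebra_simps)
      also have "norm \<dots> \<le> 1"
        using True l m by (intro norm_convex_combination_one_le_one contr j) (auto simp: field_simps)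
      finally show ?thesis .
    next
      case False
      have "norm (\<Sum>k\<in>R. 1 - t k) \<le> (\<Sum>k\<in>R. 1)"
        by (rule order_trans [OF norm_sum sum_mono]) (simp add: R_def contr)
      then have avg: "norm (scaleR (1 / m) (\<Sum>k\<in>R. 1 - t k)) \<le> 1"
        using m by (simp add: m_def)
      have "1 + scaleR l (scaleR (1 / m) (t j)) = scaleR (1 - l) 1 + scaleR l (scaleR (1 / m) (\<Sum>k\<in>R. 1 - t k))"
        using m by (simp add: sum_R algebra_simps)
      also have "norm \<dots> \<le> 1"
        using avg False l by (intro norm_convex_combination_one_le_one) auto
      finally show ?thesis .
    qed
  qed
  then show ?thesis using m by simp
qed

lemma norm_isometry_compression_le:
  fixes s x :: "'a::cstar_algebra"
  assumes "adj s * s = 1"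
  shows "norm (adj s * x * s) \<le> norm x"
proof -
  have "norm (adj s * x * s) \<le> norm (adj s) * norm x * norm s"
    by (rule order_trans [OF norm_mult_ineq mult_right_mono [OF norm_mult_ineq norm_ge_zero]])
  also have "\<dots> \<le> 1 * norm x * 1"
    using norm_isometry_le_one [OF assms] by (intro mult_mono) (auto simp: norm_adj)
  finally show ?thesis by simp
qed

text \<open>For \<open>j \<noteq> e\<close> the elements \<open>adj (s e) * s j * adj (s j) * s e\<close> are of the form
  \<open>adj x * x\<close> with \<open>x = adj (s j) * s e\<close>, sum to \<open>0\<close>, and lie within distance \<open>1\<close> of \<open>1\<close>.\<close>
lemma cuntz_family_adj_mult:
  fixes s :: "nat \<Rightarrow> 'a::cstar_algebra"
  assumes iso: "\<forall>e<N. adj (s e) * s e = 1" and sum: "(\<Sum>e<N. s e * adj (s e)) = 1"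
    and e: "e < N" and k: "k < N"
  shows "adj (s k) * s e = (if e = k then 1 else 0)"
proof (cases "e = k")
  case False
  define t where "t j = adj (s e) * (s j * adj (s j)) * s e" for j
  have t_eq: "t j = adj (adj (s j) * s e) * (adj (s j) * s e)" for j
    by (simp add: t_def adj_mult adj_adj mult.assoc)
  have "sum t {..<N} = 1"
    unfolding t_def using iso e
    by (simp add: sum_distrib_left [symmetric] sum_distrib_right [symmetric] sum)
  moreover have "t e = 1"
    using iso e by (simp add: t_def mult.assoc)
  ultimately have sum_t: "sum t ({..<N} - {e}) = 0"
    using sum.remove [of "{..<N}" e t] e by simp
  have "norm (1 - t j) \<le> 1" if j: "j < N" for j
  proof -
    define P where "P = s j * adj (s j)"
    have "P * P = s j * (adj (s j) * s j) * adj (s j)"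
      by (simp add: P_def mult.assoc)
    then have "P * P = P"
      using iso j by (simp add: P_def)
    then have "(1 - P) * (1 - P) = 1 - P"
      by (simp add: left_diff_distrib right_diff_distrib)
    moreover have "adj (1 - P) = 1 - P"
      by (simp add: P_def adj_diff adj_mult adj_adj)
    ultimately have "norm (1 - P) \<le> 1"
      by (intro norm_projection_le_one)
    moreover have "1 - t j = adj (s e) * (1 - P) * s e"
      using iso e by (simp add: t_def P_def left_diff_distrib right_diff_distrib)
    ultimately show ?thesis
      using norm_isometry_compression_le [of "s e" "1 - P"] iso e by simp
  qed
  then have "t k = 0"
    using k False
    by (intro selfadjoint_sum_eq_0_imp_eq_0 [OF _ _ _ sum_t]) (auto simp: t_eq adj_mult adj_adj)
  then have "norm (adj (s k) * s e) ^ 2 = 0"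
    by (simp only: t_eq cstar_identity [symmetric] norm_zero)
  with False show ?thesis by simp
qed (use iso e in simp)

lemma clinear_map_scaled_compression:
  fixes s :: "'i \<Rightarrow> 'a::cstar_algebra"
  shows "clinear_map (\<lambda>a. scaleR c (\<Sum>p\<in>P. adj (s p) * a * s p))"
  unfolding clinear_map_def
  by (simp add: distrib_left distrib_right sum.distrib scaleR_add_right mult_scaleC_left
      mult_scaleC_right scaleC_sum_right [symmetric] scaleC_scaleR_commute)

lemma positive_map_scaled_compression:
  fixes s :: "'i \<Rightarrow> 'a::cstar_algebra"
  assumes P: "finite P"
    and orth: "\<And>p q. p \<in> P \<Longrightarrow> q \<in> P \<Longrightarrow> adj (s q) * s p = (if p = q then 1 else 0)"
    and c: "0 \<le> c"
  shows "positive_map (\<lambda>a. scaleR c (\<Sum>p\<in>P. adj (s p) * a * s p))"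
  unfolding positive_map_def positive_def
proof (intro allI impI)
  fix x :: 'a
  assume "\<exists>y. x = adj y * y"
  then obtain y where x: "x = adj y * y" by blast
  \<comment> \<open>a square root of the image: the cross terms of \<open>adj z * z\<close> vanish by orthogonality\<close>
  define z where "z = scaleR (sqrt c) (\<Sum>q\<in>P. s q * y * s q)"
  have cross: "(\<Sum>p\<in>P. adj (s q) * adj y * adj (s q) * (s p * y * s p)) = adj (s q) * x * s q"
    if q: "q \<in> P" for q
  proof -
    have "(\<Sum>p\<in>P. adj (s q) * adj y * adj (s q) * (s p * y * s p))
        = (\<Sum>p\<in>P. adj (s q) * adj y * (adj (s q) * s p) * (y * s p))"
      by (simp add: mult.assoc)
    also have "\<dots> = adj (s q) * adj y * (y * s q)"
      using P q by (simp add: orth if_distrib if_distribR cong: if_cong)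
    finally show ?thesis by (simp add: x mult.assoc)
  qed
  have "adj z * z = scaleR (sqrt c * sqrt c)
      (\<Sum>q\<in>P. \<Sum>p\<in>P. adj (s q) * adj y * adj (s q) * (s p * y * s p))"
    by (simp add: z_def adj_scaleR adj_sum adj_mult mult.assoc sum_product)
  also have "\<dots> = scaleR c (\<Sum>q\<in>P. adj (s q) * x * s q)"
    using c by (simp add: cross)
  finally show "\<exists>y. scaleR c (\<Sum>p\<in>P. adj (s p) * x * s p) = adj y * y"
    by metis
qed

lemma transfer_operator_scaled_compression:
  fixes s :: "'i \<Rightarrow> 'a::cstar_algebra"
  assumes P: "finite P"
    and orth: "\<And>p q. p \<in> P \<Longrightarrow> q \<in> P \<Longrightarrow> adj (s q) * s p = (if p = q then 1 else 0)"
    and c: "0 \<le> c"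
  shows "transfer_operator (\<lambda>a. \<Sum>p\<in>P. s p * a * adj (s p))
           (\<lambda>a. scaleR c (\<Sum>p\<in>P. adj (s p) * a * s p))"
proof -
  have "adj (s q) * ((\<Sum>p\<in>P. s p * a * adj (s p)) * b) * s q = a * (adj (s q) * b * s q)"
    if q: "q \<in> P" for a b q
  proof -
    have "adj (s q) * ((\<Sum>p\<in>P. s p * a * adj (s p)) * b) * s q
        = (\<Sum>p\<in>P. (adj (s q) * s p) * (a * (adj (s p) * b * s q)))"
      by (simp add: sum_distrib_left sum_distrib_right mult.assoc)
    also have "\<dots> = a * (adj (s q) * b * s q)"
      using P q by (simp add: orth if_distrib if_distribR cong: if_cong)
    finally show ?thesis .
  qed
  then show ?thesis
    unfolding transfer_operator_def
    using clinear_map_scaled_compression positive_map_scaled_compression [OF P orth c]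
    by (simp add: sum_distrib_left)
qed

definition words :: "nat \<Rightarrow> nat \<Rightarrow> nat list set" where
  "words N k = {xs. set xs \<subseteq> {..<N} \<and> length xs = k}"

lemma finite_words [simp]: "finite (words N k)"
  unfolding words_def by (rule finite_lists_length_eq) simp

lemma card_words: "card (words N k) = N ^ k"
  by (simp add: words_def card_lists_length_eq)

lemma paths_eq_words: "paths N1 N2 n = words N1 (fst n) \<times> words N2 (snd n)"
  by (auto simp: paths_def words_def)

lemma adj_prod_list_mult_prod_list:
  fixes s :: "nat \<Rightarrow> 'a::cstar_algebra"
  assumes orth: "\<And>e e'. e < N \<Longrightarrow> e' < N \<Longrightarrow> adj (s e') * s e = (if e = e' then 1 else 0)"
    and "w \<in> words N k" and "w' \<in> words N k"
  shows "adj (prod_list (map s w')) * prod_list (map s w) = (if w = w' then 1 else 0)"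
proof -
  have "length w = length w'" "set w \<subseteq> {..<N}" "set w' \<subseteq> {..<N}"
    using assms(2,3) by (auto simp: words_def)
  then show ?thesis
  proof (induction w w' rule: list_induct2)
    case (Cons x xs y ys)
    have "adj (prod_list (map s (y # ys))) * prod_list (map s (x # xs))
        = adj (prod_list (map s ys)) * (adj (s y) * s x) * prod_list (map s xs)"
      by (simp add: adj_mult mult.assoc)
    then show ?case
      using orth Cons by auto
  qed simp
qed

definition edge_compression :: "(nat \<Rightarrow> 'a::cstar_algebra) \<Rightarrow> nat \<Rightarrow> 'a \<Rightarrow> 'a" where
  "edge_compression s N a = (\<Sum>e<N. adj (s e) * a * s e)"

lemma funpow_edge_compression_scaleR:
  "(edge_compression s N ^^ k) (scaleR r x) = scaleR r ((edge_compression s N ^^ k) x)"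
  by (induction k) (simp_all add: edge_compression_def scaleR_sum_right)

lemma sum_words_compression:
  fixes s :: "nat \<Rightarrow> 'a::cstar_algebra"
  shows "(\<Sum>w\<in>words N k. adj (prod_list (map s w)) * a * prod_list (map s w))
         = (edge_compression s N ^^ k) a"
proof (induction k arbitrary: a)
  case 0
  have "words N 0 = {[]}" by (auto simp: words_def)
  then show ?case by simp
next
  case (Suc k)
  have words_Suc: "words N (Suc k) = (\<lambda>(xs, e). e # xs) ` (words N k \<times> {..<N})"
    unfolding words_def by (rule lists_length_Suc_eq)
  have inj: "inj_on (\<lambda>(xs, e). e # xs) (words N k \<times> {..<N})"
    by (auto simp: inj_on_def)
  have "(\<Sum>w\<in>words N (Suc k). adj (prod_list (map s w)) * a * prod_list (map s w))
      = (\<Sum>(xs, e)\<in>words N k \<times> {..<N}. adj (prod_list (map s xs)) * (adj (s e) * a * s e) * prod_list (map s xs))"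
    unfolding words_Suc by (subst sum.reindex [OF inj]) (simp add: case_prod_beta adj_mult mult.assoc)
  also have "\<dots> = (\<Sum>xs\<in>words N k. \<Sum>e<N. adj (prod_list (map s xs)) * (adj (s e) * a * s e) * prod_list (map s xs))"
    by (simp add: sum.cartesian_product)
  also have "\<dots> = (\<Sum>xs\<in>words N k. adj (prod_list (map s xs)) * edge_compression s N a * prod_list (map s xs))"
    by (simp add: edge_compression_def sum_distrib_left sum_distrib_right)
  also have "\<dots> = (edge_compression s N ^^ Suc k) a"
    by (simp add: Suc funpow_swap1)
  finally show ?case .
qed

text \<open>The commutation relations say that \<open>\<theta>\<close> permutes the two-edge products
  \<open>sB e * sR f = sR f' * sB e'\<close>, so both composites sum the same compressions.\<close>
lemma edge_compression_commute:
  fixes sB sR :: "nat \<Rightarrow> 'a::cstar_algebra"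
  assumes theta_bij: "bij_betw theta ({..<N1} \<times> {..<N2}) ({..<N2} \<times> {..<N1})"
    and rel: "\<forall>e<N1. \<forall>f<N2. sB e * sR f = sR (fst (theta (e, f))) * sB (snd (theta (e, f)))"
  shows "edge_compression sR N2 (edge_compression sB N1 a) = edge_compression sB N1 (edge_compression sR N2 a)"
proof -
  define g where "g = (\<lambda>(f, e). adj (sR f * sB e) * a * (sR f * sB e))"
  have "edge_compression sR N2 (edge_compression sB N1 a)
      = (\<Sum>f<N2. \<Sum>e<N1. adj (sB e * sR f) * a * (sB e * sR f))"
    by (simp add: edge_compression_def sum_distrib_left sum_distrib_right adj_mult mult.assoc)
  also have "\<dots> = (\<Sum>(e, f)\<in>{..<N1} \<times> {..<N2}. adj (sB e * sR f) * a * (sB e * sR f))"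
    by (subst sum.swap) (simp add: sum.cartesian_product)
  also have "\<dots> = (\<Sum>x\<in>{..<N1} \<times> {..<N2}. g (theta x))"
    by (rule sum.cong [OF refl]) (use rel in \<open>auto simp: g_def case_prod_beta\<close>)
  also have "\<dots> = (\<Sum>y\<in>{..<N2} \<times> {..<N1}. g y)"
    by (rule sum.reindex_bij_betw [OF theta_bij])
  also have "\<dots> = (\<Sum>f<N2. \<Sum>e<N1. adj (sR f * sB e) * a * (sR f * sB e))"
    by (simp add: g_def sum.cartesian_product)
  also have "\<dots> = edge_compression sB N1 (edge_compression sR N2 a)"
    by (subst sum.swap) (simp add: edge_compression_def sum_distrib_left sum_distrib_right adj_mult mult.assoc)
  finally show ?thesis .
qed

lemma funpow_commute_funpow:
  assumes "\<And>x. f (g x) = g (f x)"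
  shows "(f ^^ m) ((g ^^ n) x) = (g ^^ n) ((f ^^ m) x)"
proof -
  have "f ((g ^^ n) x) = (g ^^ n) (f x)" for x
    by (induction n) (simp_all add: assms)
  then show ?thesis by (induction m) simp_all
qed

lemma theta_family_adj_mult:
  assumes "theta_family N1 N2 theta sB sR"
  shows "\<And>e e'. e < N1 \<Longrightarrow> e' < N1 \<Longrightarrow> adj (sB e') * sB e = (if e = e' then 1 else 0)"
    and "\<And>f f'. f < N2 \<Longrightarrow> f' < N2 \<Longrightarrow> adj (sR f') * sR f = (if f = f' then 1 else 0)"
proof -
  have "\<forall>e<N1. adj (sB e) * sB e = 1" "(\<Sum>e<N1. sB e * adj (sB e)) = 1"
    and "\<forall>f<N2. adj (sR f) * sR f = 1" "(\<Sum>f<N2. sR f * adj (sR f)) = 1"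
    using assms by (simp_all add: theta_family_def)
  then show "\<And>e e'. e < N1 \<Longrightarrow> e' < N1 \<Longrightarrow> adj (sB e') * sB e = (if e = e' then 1 else 0)"
    and "\<And>f f'. f < N2 \<Longrightarrow> f' < N2 \<Longrightarrow> adj (sR f') * sR f = (if f = f' then 1 else 0)"
    by (simp_all add: cuntz_family_adj_mult)
qed

lemma adj_spath_mult_spath:
  fixes sB sR :: "nat \<Rightarrow> 'a::cstar_algebra"
  assumes fam: "theta_family N1 N2 theta sB sR"
    and p: "p \<in> paths N1 N2 n" and q: "q \<in> paths N1 N2 n"
  shows "adj (spath sB sR q) * spath sB sR p = (if p = q then 1 else 0)"
proof -
  have "adj (spath sB sR q) * spath sB sR p
      = adj (prod_list (map sR (snd q)))
        * (adj (prod_list (map sB (fst q))) * prod_list (map sB (fst p)))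
        * prod_list (map sR (snd p))"
    by (simp add: spath_def adj_mult mult.assoc)
  then show ?thesis
    using p q adj_prod_list_mult_prod_list [OF theta_family_adj_mult(1) [OF fam], where w = "fst p" and w' = "fst q"]
      adj_prod_list_mult_prod_list [OF theta_family_adj_mult(2) [OF fam], where w = "snd p" and w' = "snd q"]
    by (auto simp: paths_eq_words prod_eq_iff)
qed

lemma transfer_operator_L_n:
  assumes fam: "theta_family N1 N2 theta sB sR"
  shows "transfer_operator (alpha_n N1 N2 sB sR n) (L_n N1 N2 sB sR n)"
proof -
  have "finite (paths N1 N2 n)"
    by (simp add: paths_eq_words)
  from transfer_operator_scaled_compression [OF this adj_spath_mult_spath [OF fam]]
  show ?thesis
    unfolding alpha_n_def [abs_def] L_n_def [abs_def] by simp
qed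

lemma L_n_one:
  assumes fam: "theta_family N1 N2 theta sB sR"
  shows "L_n N1 N2 sB sR n 1 = 1"
proof -
  have "(\<Sum>e<N1. sB e * adj (sB e)) = 1" and "(\<Sum>f<N2. sR f * adj (sR f)) = 1"
    using fam by (simp_all add: theta_family_def)
  then have "N1 \<noteq> 0" and "N2 \<noteq> 0"
    by (metis lessThan_0 sum.empty zero_neq_one)+
  have "(\<Sum>p\<in>paths N1 N2 n. adj (spath sB sR p) * 1 * spath sB sR p) = (\<Sum>p\<in>paths N1 N2 n. 1)"
    by (rule sum.cong [OF refl]) (simp add: adj_spath_mult_spath [OF fam])
  also have "\<dots> = scaleR (real (N1 ^ fst n * N2 ^ snd n)) 1"
    by (simp add: paths_eq_words card_cartesian_product card_words of_real_def [symmetric])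
  finally show ?thesis
    using \<open>N1 \<noteq> 0\<close> \<open>N2 \<noteq> 0\<close> by (simp add: L_n_def)
qed

lemma L_n_eq_funpow_edge_compression:
  fixes sB sR :: "nat \<Rightarrow> 'a::cstar_algebra"
  shows "L_n N1 N2 sB sR n a = scaleR (1 / real (N1 ^ fst n * N2 ^ snd n))
     ((edge_compression sR N2 ^^ snd n) ((edge_compression sB N1 ^^ fst n) a))"
proof -
  have "(\<Sum>p\<in>paths N1 N2 n. adj (spath sB sR p) * a * spath sB sR p)
      = (\<Sum>(w, v)\<in>words N1 (fst n) \<times> words N2 (snd n).
           adj (prod_list (map sR v)) * (adj (prod_list (map sB w)) * a * prod_list (map sB w))
           * prod_list (map sR v))"
    by (simp add: paths_eq_words spath_def adj_mult mult.assoc case_prod_beta)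
  also have "\<dots> = (\<Sum>v\<in>words N2 (snd n). \<Sum>w\<in>words N1 (fst n).
           adj (prod_list (map sR v)) * (adj (prod_list (map sB w)) * a * prod_list (map sB w))
           * prod_list (map sR v))"
    by (subst sum.swap) (simp add: sum.cartesian_product)
  also have "\<dots> = (edge_compression sR N2 ^^ snd n) ((edge_compression sB N1 ^^ fst n) a)"
    by (simp add: sum_distrib_left sum_distrib_right sum_words_compression flip: sum_words_compression)
  finally show ?thesis by (simp add: L_n_def)
qed

lemma L_n_comp_L_n:
  fixes sB sR :: "nat \<Rightarrow> 'a::cstar_algebra"
  assumes theta_bij: "bij_betw theta ({..<N1} \<times> {..<N2}) ({..<N2} \<times> {..<N1})"
    and fam: "theta_family N1 N2 theta sB sR"
  shows "L_n N1 N2 sB sR m (L_n N1 N2 sB sR n a) = L_n N1 N2 sB sR (m + n) a"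
proof -
  have "edge_compression sR N2 (edge_compression sB N1 x) = edge_compression sB N1 (edge_compression sR N2 x)"
    for x
    using fam by (intro edge_compression_commute [OF theta_bij]) (simp add: theta_family_def)
  then have "(edge_compression sB N1 ^^ k) ((edge_compression sR N2 ^^ l) x)
      = (edge_compression sR N2 ^^ l) ((edge_compression sB N1 ^^ k) x)" for k l x
    by (intro funpow_commute_funpow) simp
  then show ?thesis
    by (simp add: L_n_eq_funpow_edge_compression funpow_edge_compression_scaleR funpow_add power_add)
qed

theorem proposition5p1:
  fixes N1 N2 :: nat
    and theta :: "nat \<times> nat \<Rightarrow> nat \<times> nat"
    and sB sR :: "nat \<Rightarrow> 'a::cstar_algebra"
  assumes theta_bij: "bij_betw theta ({..<N1} \<times> {..<N2}) ({..<N2} \<times> {..<N1})"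
    and fam: "theta_family N1 N2 theta sB sR"
  shows "(\<forall>n. transfer_operator (alpha_n N1 N2 sB sR n) (L_n N1 N2 sB sR n) \<and>
              L_n N1 N2 sB sR n 1 = 1) \<and>
         (\<forall>m n. L_n N1 N2 sB sR m \<circ> L_n N1 N2 sB sR n = L_n N1 N2 sB sR (m + n))"
  using transfer_operator_L_n [OF fam] L_n_one [OF fam] L_n_comp_L_n [OF theta_bij fam]
  by auto

end
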